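(* Let $T$, $S$, $A$ be closed Hermitian subspaces in $X^2$ with $D(T)=D(S)=:D\subset D(A)$ and $T=S+A$, and assume $\rho(T)\cap\rho(S)\neq\emptyset$. (i) If $A_s$ is $S_s$-compact, then $T$ is a compact perturbation of $S$. (ii) If $T$ is a compact perturbation of $S$, $T(0)^\perp$ reduces both $S$ and $A$, and $T_s$ is a bounded operator on $D$, then $A_s$ is $S_s$-compact.
   Context: $X$ is a complex Hilbert space and $X^2=X\times X$ carries the inner product $\langle (x,f),(y,g)\rangle=\langle x,y\rangle+\langle f,g\rangle$. A subspace $T$ in $X^2$ means a linear subspace of $X^2$ (a linear relation); a linear operator in $X$ is identified with its graph. Notation: $D(T)=\{x:(x,f)\in T \text{ for some } f\}$, $T(x)=\{f:(x,f)\in T\}$, $T^{-1}=\{(f,x):(x,f)\in T\}$, $\lambda I$ is the graph of $x\mapsto \lambda x$, and $T-\lambda I=\{(x,f-\lambda x):(x,f)\in T\}$. The adjoint is $T^*=\{(y,g)\in X^2:\langle g,x\rangle=\langle y,f\rangle \text{ for all }(x,f)\in T\}$; $T$ is Hermitian if $T\subset T^*$. For subspaces $S,A$ in $X^2$, $S+A=\{(x,f+g):(x,f)\in S,(x,g)\in A\}$. For a closed subspace $T$, set $T_\infty=\{(0,g)\in X^2:(0,g)\in T\}$ and $T_s=T\ominus T_\infty$ (orthogonal complement of $T_\infty$ in $T$), so $T=T_s\oplus T_\infty$; $T_s$ is the graph of a linear operator (the operator part of $T$) with $D(T_s)=D(T)$ and $R(T_s)\subset T(0)^\perp$. Resolvent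 set: $\rho(T)=\{\lambda\in\mathbb C:(\lambda I-T)^{-1}$ is a bounded linear operator defined on all of $X\}$. Reducing subspace: a closed subspace $X_1\subset X$ with orthogonal projection $P$ onto it reduces $T$ if $\{(Px,Pf):(x,f)\in T\}\subset T$. For linear operators $U,V$ in $X$ with $D(V)\subset D(U)$: $U$ is $V$-compact if $U|_{D(V)}$ is compact as a map from $(D(V),\|\cdot\|_V)$ into $X$, where $\|x\|_V=\|x\|+\|Vx\|$. Compact perturbation: for closed subspaces $T,S$ in $X^2$ with orthogonal projections $P_T,P_S$ of $X^2$ onto $T$, $S$, $T$ is a compact perturbation of $S$ if $P_T-P_S$ is a compact operator. *)

theory Defs
  imports "HOL-Analysis.Analysis"
begin

text \<open>The library has no complex inner product spaces, so we introduce them as a type class: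
a complex vector space whose real scalar multiplication is the restriction of the complex one,
with a sesquilinear Hermitian positive definite inner product inducing the norm.
The inner product is linear in the first argument, conjugate linear in the second.\<close>

class complex_vector = real_vector +
  fixes scaleC :: "complex \<Rightarrow> 'a \<Rightarrow> 'a"  (infixr \<open>*\<^sub>C\<close> 75)
  assumes scaleC_add_right: "a *\<^sub>C (x + y) = a *\<^sub>C x + a *\<^sub>C y"
    and scaleC_add_left: "(a + b) *\<^sub>C x = a *\<^sub>C x + b *\<^sub>C x"
    and scaleC_scaleC: "a *\<^sub>C (b *\<^sub>C x) = (a * b) *\<^sub>C x"
    and scaleC_one: "1 *\<^sub>C x = x"
    and scaleR_scaleC: "scaleR r x = complex_of_real r *\<^sub>C x"

class complex_inner = complex_vector + real_normed_vector +
  fixes cinner :: "'a \<Rightarrow> 'a \<Rightarrow> complex"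
  assumes cinner_conj: "cinner x y = cnj (cinner y x)"
    and cinner_add_left: "cinner (x + y) z = cinner x z + cinner y z"
    and cinner_scaleC_left: "cinner (a *\<^sub>C x) y = a * cinner x y"
    and cinner_nonneg: "Re (cinner x x) \<ge> 0" "Im (cinner x x) = 0"
    and cinner_eq_zero: "cinner x x = 0 \<longleftrightarrow> x = 0"
    and norm_cinner: "norm x = sqrt (Re (cinner x x))"

class chilbert_space = complex_inner + complete_space

definition pinner :: "('a::complex_inner \<times> 'a) \<Rightarrow> ('a \<times> 'a) \<Rightarrow> complex" where
  "pinner p q = cinner (fst p) (fst q) + cinner (snd p) (snd q)"

definition is_subspace :: "('a::complex_vector \<times> 'a) set \<Rightarrow> bool" where
  "is_subspace T \<longleftrightarrow> (0, 0) \<in> T \<and>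
     (\<forall>x f y g. (x, f) \<in> T \<longrightarrow> (y, g) \<in> T \<longrightarrow> (x + y, f + g) \<in> T) \<and>
     (\<forall>c x f. (x, f) \<in> T \<longrightarrow> (c *\<^sub>C x, c *\<^sub>C f) \<in> T)"

definition closed_subspace :: "('a::complex_inner \<times> 'a) set \<Rightarrow> bool" where
  "closed_subspace T \<longleftrightarrow> is_subspace T \<and> closed T"

definition rdom :: "('a \<times> 'a) set \<Rightarrow> 'a set" where
  "rdom T = {x. \<exists>f. (x, f) \<in> T}"

definition img :: "('a \<times> 'a) set \<Rightarrow> 'a \<Rightarrow> 'a set" where
  "img T x = {f. (x, f) \<in> T}"

definition adj :: "('a::complex_inner \<times> 'a) set \<Rightarrow> ('a \<times> 'a) set" where
  "adj T = {(y, g). \<forall>x f. (x, f) \<in> T \<longrightarrow> cinner g x = cinner y f}"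

definition hermitian :: "('a::complex_inner \<times> 'a) set \<Rightarrow> bool" where
  "hermitian T \<longleftrightarrow> T \<subseteq> adj T"

definition rel_sum :: "('a::plus \<times> 'a) set \<Rightarrow> ('a \<times> 'a) set \<Rightarrow> ('a \<times> 'a) set" where
  "rel_sum S A = {(x, f + g) | x f g. (x, f) \<in> S \<and> (x, g) \<in> A}"

text \<open>T_infinity and the operator part T_s = T minus-orthogonal T_infinity.\<close>
definition Tinf :: "('a::complex_inner \<times> 'a) set \<Rightarrow> ('a \<times> 'a) set" where
  "Tinf T = {(0, g) | g. (0, g) \<in> T}"

definition Tpart :: "('a::complex_inner \<times> 'a) set \<Rightarrow> ('a \<times> 'a) set" where
  "Tpart T = {p \<in> T. \<forall>q \<in> Tinf T. pinner p q = 0}"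

text \<open>Resolvent set: (lambda I - T)^{-1} is (the graph of) a bounded linear operator defined on all of X.\<close>
definition resolvent_set :: "('a::complex_inner \<times> 'a) set \<Rightarrow> complex set" where
  "resolvent_set T = {l. let R = {(l *\<^sub>C x - f, x) | x f. (x, f) \<in> T} in
       rdom R = UNIV \<and>
       (\<forall>y x x'. (y, x) \<in> R \<longrightarrow> (y, x') \<in> R \<longrightarrow> x = x') \<and>
       (\<exists>C. \<forall>y x. (y, x) \<in> R \<longrightarrow> norm x \<le> C * norm y)}"

definition oproj :: "'a::complex_inner set \<Rightarrow> 'a \<Rightarrow> 'a" where
  "oproj M x = (THE p. p \<in> M \<and> (\<forall>q \<in> M. cinner (x - p) q = 0))"

definition oproj2 :: "('a::complex_inner \<times> 'a) set \<Rightarrow> ('a \<times> 'a) \<Rightarrow> ('a \<times> 'a)" where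
  "oproj2 M z = (THE p. p \<in> M \<and> (\<forall>q \<in> M. pinner (z - p) q = 0))"

definition orth :: "'a::complex_inner set \<Rightarrow> 'a set" where
  "orth M = {x. \<forall>y \<in> M. cinner x y = 0}"

definition reduces :: "'a::complex_inner set \<Rightarrow> ('a \<times> 'a) set \<Rightarrow> bool" where
  "reduces X1 T \<longleftrightarrow> closed X1 \<and> {(oproj X1 x, oproj X1 f) | x f. (x, f) \<in> T} \<subseteq> T"

definition compact_op :: "('a::real_normed_vector \<Rightarrow> 'b::real_normed_vector) \<Rightarrow> bool" where
  "compact_op K \<longleftrightarrow> (\<forall>B. bounded B \<longrightarrow> compact (closure (K ` B)))"

definition compact_perturbation :: "('a::complex_inner \<times> 'a) set \<Rightarrow> ('a \<times> 'a) set \<Rightarrow> bool" where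
  "compact_perturbation T S \<longleftrightarrow> compact_op (\<lambda>z. oproj2 T z - oproj2 S z)"

text \<open>For operators (given by their graphs) U, V with D(V) subset D(U): U is V-compact if
U restricted to D(V) is compact from (D(V), norm x + norm (V x)) into X, i.e. sends
V-norm-bounded subsets of D(V) to relatively compact sets.\<close>
definition rel_compact :: "('a::real_normed_vector \<times> 'a) set \<Rightarrow> ('a \<times> 'a) set \<Rightarrow> bool" where
  "rel_compact U V \<longleftrightarrow> rdom V \<subseteq> rdom U \<and>
     (\<forall>B \<subseteq> V. (\<exists>M. \<forall>x v. (x, v) \<in> B \<longrightarrow> norm x + norm v \<le> M) \<longrightarrow>
        compact (closure {f. \<exists>x v. (x, v) \<in> B \<and> (x, f) \<in> U}))"

definition bounded_rel :: "('a::real_normed_vector \<times> 'a) set \<Rightarrow> bool" where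
  "bounded_rel T \<longleftrightarrow> (\<exists>C. \<forall>x f. (x, f) \<in> T \<longrightarrow> norm f \<le> C * norm x)"

end

theory Submission
  imports Defs
begin

text \<open>Write \<open>P\<^sub>T\<close>, \<open>P\<^sub>S\<close> for the projections of \<open>X\<^sup>2\<close> onto the graphs. If \<open>(x, f) \<in> S\<close> and
  \<open>(x, g) \<in> A\<^sub>s\<close>, then \<open>(x, f + g) \<in> T\<close> and hence \<open>P\<^sub>T (x, f) - (x, f) = (I - P\<^sub>T) (0, g)\<close>:
  the difference of the projections on \<open>S\<close> is a bounded linear image of the values of \<open>A\<^sub>s\<close>.

  (i) Split a bounded sequence as \<open>z = a + w\<close> with \<open>a = P\<^sub>S z\<close> and \<open>w \<bottom> S\<close>, so that
  \<open>(P\<^sub>T - P\<^sub>S) z = (P\<^sub>T a - a) + P\<^sub>T w\<close>. The first term is handled by the identity above. For the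
  second, the resolvents at a common regular point \<open>l\<close> show that \<open>P\<^sub>T w\<close> differs from
  \<open>(R g, l R g)\<close>, \<open>R = (l - T)\<^sup>-\<^sup>1\<close>, by a point of \<open>S\<close>, with \<open>g\<close> again a value of \<open>A\<^sub>s\<close> over a
  graph-bounded set; and \<open>w \<bottom> S\<close> gives \<open>\<parallel>P\<^sub>T w\<parallel>\<^sup>2 \<le> \<parallel>w\<parallel> \<parallel>(I - P\<^sub>S) P\<^sub>T w\<parallel>\<close>, where the right factor
  depends boundedly and linearly on \<open>g\<close>.

  (ii) By the identity, \<open>(P\<^sub>T - P\<^sub>S) (x, v) = (I - P\<^sub>T) (0, s)\<close> for \<open>(x, v) \<in> S\<^sub>s\<close> and \<open>(x, s) \<in> A\<^sub>s\<close>.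
  The reduction hypothesis puts \<open>s\<close> into \<open>T(0)\<^sup>\<bottom>\<close>, where the boundedness of \<open>T\<^sub>s\<close> makes
  \<open>h \<mapsto> (I - P\<^sub>T) (0, h)\<close> bounded below, so compactness of \<open>P\<^sub>T - P\<^sub>S\<close> passes to the values \<open>s\<close>.\<close>

section \<open>Complex inner product spaces\<close>

lemma scaleC_zero_right [simp]: "a *\<^sub>C (0::'a::complex_vector) = 0"
  using scaleC_add_right[of a "0::'a" 0] by simp

lemma scaleC_diff_right: "a *\<^sub>C ((x::'a::complex_vector) - y) = a *\<^sub>C x - a *\<^sub>C y"
  using scaleC_add_right[of a "x - y" y] by (simp add: eq_diff_eq)

lemma cinner_add_right: "cinner (x::'a::complex_inner) (y + z) = cinner x y + cinner x z"
  using cinner_conj[of x "y + z"] cinner_conj[of y x] cinner_conj[of z x]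
  by (simp add: cinner_add_left)

lemma cinner_scaleC_right: "cinner (x::'a::complex_inner) (a *\<^sub>C y) = cnj a * cinner x y"
  using cinner_conj[of x "a *\<^sub>C y"] cinner_conj[of y x] by (simp add: cinner_scaleC_left)

lemma cinner_zero_left [simp]: "cinner 0 (y::'a::complex_inner) = 0"
  using cinner_add_left[of 0 0 y] by simp

lemma cinner_zero_right [simp]: "cinner (y::'a::complex_inner) 0 = 0"
  using cinner_conj[of y 0] by simp

lemma cinner_minus_left: "cinner (- (x::'a::complex_inner)) y = - cinner x y"
  using cinner_add_left[of x "- x" y] by (simp add: eq_neg_iff_add_eq_0 add.commute)

lemma cinner_minus_right: "cinner (y::'a::complex_inner) (- x) = - cinner y x"
  using cinner_conj[of y "- x"] cinner_conj[of x y] by (simp add: cinner_minus_left)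

lemma cinner_diff_left: "cinner ((x::'a::complex_inner) - z) y = cinner x y - cinner z y"
  using cinner_add_left[of x "- z" y] by (simp add: cinner_minus_left)

lemma cinner_diff_right: "cinner (y::'a::complex_inner) (x - z) = cinner y x - cinner y z"
  using cinner_add_right[of y x "- z"] by (simp add: cinner_minus_right)

lemma cinner_scaleR_left: "cinner (r *\<^sub>R (x::'a::complex_inner)) y = of_real r * cinner x y"
  by (simp add: scaleR_scaleC cinner_scaleC_left)

lemma cinner_scaleR_right: "cinner (y::'a::complex_inner) (r *\<^sub>R x) = of_real r * cinner y x"
  by (simp add: scaleR_scaleC cinner_scaleC_right)

lemma cinner_commute_eq_0: "cinner (x::'a::complex_inner) y = 0 \<longleftrightarrow> cinner y x = 0"
  using cinner_conj[of x y] by auto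

lemma Re_cinner_commute: "Re (cinner (y::'a::complex_inner) x) = Re (cinner x y)"
  using cinner_conj[of y x] by simp

lemma power2_norm_eq_cinner: "(norm (x::'a::complex_inner))\<^sup>2 = Re (cinner x x)"
  using norm_cinner[of x] cinner_nonneg(1)[of x] by simp

lemma cinner_self: "cinner (x::'a::complex_inner) x = of_real ((norm x)\<^sup>2)"
  using power2_norm_eq_cinner[of x] cinner_nonneg(2)[of x] by (simp add: complex_eq_iff)

lemma power2_norm_add:
  "(norm ((x::'a::complex_inner) + y))\<^sup>2 = (norm x)\<^sup>2 + (norm y)\<^sup>2 + 2 * Re (cinner x y)"
  by (simp add: power2_norm_eq_cinner cinner_add_left cinner_add_right Re_cinner_commute[of y x])

lemma power2_norm_diff:
  "(norm ((x::'a::complex_inner) - y))\<^sup>2 = (norm x)\<^sup>2 + (norm y)\<^sup>2 - 2 * Re (cinner x y)"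
  by (simp add: power2_norm_eq_cinner cinner_diff_left cinner_diff_right Re_cinner_commute[of y x])

lemma pythagoras:
  "cinner (x::'a::complex_inner) y = 0 \<Longrightarrow> (norm (x + y))\<^sup>2 = (norm x)\<^sup>2 + (norm y)\<^sup>2"
  by (simp add: power2_norm_add)

lemma Re_cinner_le_norm: "Re (cinner (x::'a::complex_inner) y) \<le> norm x * norm y"
proof (cases "x = 0 \<or> y = 0")
  case False
  let ?a = "norm x" and ?b = "norm y"
  have ab: "?a * ?b > 0" using False by simp
  have "(norm (?b *\<^sub>R x - ?a *\<^sub>R y))\<^sup>2
      = 2 * (?a * ?b) * (?a * ?b) - 2 * (?a * ?b) * Re (cinner x y)"
    unfolding power2_norm_diff
    by (simp add: cinner_scaleR_left cinner_scaleR_right power2_eq_square algebra_simps)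
  then have "(?a * ?b) * Re (cinner x y) \<le> (?a * ?b) * (?a * ?b)"
    using zero_le_power2[of "norm (?b *\<^sub>R x - ?a *\<^sub>R y)"] by linarith
  then show ?thesis using ab by (rule mult_le_cancel_left_pos[THEN iffD1, rotated])
qed auto

lemma abs_Re_cinner_le_norm: "\<bar>Re (cinner (x::'a::complex_inner) y)\<bar> \<le> norm x * norm y"
  using Re_cinner_le_norm[of x y] Re_cinner_le_norm[of "- x" y] by (simp add: cinner_minus_left)

lemma cinner_eq_0_iff_Re:
  "cinner (x::'a::complex_inner) y = 0 \<longleftrightarrow> Re (cinner x y) = 0 \<and> Re (cinner x (\<i> *\<^sub>C y)) = 0"
  by (simp add: cinner_scaleC_right complex_eq_iff)

lemma norm_scaleC: "norm (c *\<^sub>C (x::'a::complex_inner)) = norm c * norm x"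
proof -
  have "(norm (c *\<^sub>C x))\<^sup>2 = Re (c * cnj c * cinner x x)"
    by (simp only: power2_norm_eq_cinner cinner_scaleC_left cinner_scaleC_right mult_ac)
  also have "c * cnj c * cinner x x = of_real ((norm c * norm x)\<^sup>2)"
    by (simp only: complex_norm_square[symmetric] cinner_self of_real_mult power_mult_distrib)
  also have "Re \<dots> = (norm c * norm x)\<^sup>2"
    by (rule Re_complex_of_real)
  finally show ?thesis by (simp add: power2_eq_iff_nonneg)
qed

lemma norm_scaleC_diff_le: "norm (c *\<^sub>C x - (f::'a::complex_inner)) \<le> (norm c + 1) * norm (x, f)"
proof -
  have "norm (c *\<^sub>C x - f) \<le> norm c * norm x + norm f"
    using norm_triangle_ineq4[of "c *\<^sub>C x" f] by (simp add: norm_scaleC)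
  also have "\<dots> \<le> norm c * norm (x, f) + norm (x, f)"
    using norm_fst_le[of x f] norm_snd_le[of f x] by (intro add_mono mult_left_mono) simp_all
  finally show ?thesis by (simp add: algebra_simps)
qed

lemma bounded_linear_scaleC: "bounded_linear (\<lambda>x::'a::complex_inner. c *\<^sub>C x)"
  by (rule bounded_linear_intro[where K = "norm c"])
    (simp_all add: scaleC_add_right scaleR_scaleC scaleC_scaleC norm_scaleC mult.commute)

lemma bounded_linear_Re_cinner_left: "bounded_linear (\<lambda>x::'a::complex_inner. Re (cinner x y))"
  by (rule bounded_linear_intro[where K = "norm y"])
    (simp_all add: cinner_add_left cinner_scaleR_left abs_Re_cinner_le_norm)

instantiation prod :: (complex_vector, complex_vector) complex_vector
begin

definition scaleC_prod_def: "c *\<^sub>C z = (c *\<^sub>C fst z, c *\<^sub>C snd z)"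

instance
  by standard (auto simp: scaleC_prod_def scaleC_add_right scaleC_add_left scaleC_scaleC
      scaleC_one scaleR_scaleC prod_eq_iff)

end

instantiation prod :: (complex_inner, complex_inner) complex_inner
begin

definition cinner_prod_def: "cinner z w = cinner (fst z) (fst w) + cinner (snd z) (snd w)"

instance
proof
  fix x y z :: "'a \<times> 'b" and a :: complex
  have self: "cinner x x = of_real ((norm (fst x))\<^sup>2 + (norm (snd x))\<^sup>2)"
    by (simp add: cinner_prod_def cinner_self)
  show "cinner x y = cnj (cinner y x)"
    by (simp add: cinner_prod_def cinner_conj[of "fst x"] cinner_conj[of "snd x"])
  show "cinner (x + y) z = cinner x z + cinner y z"
    by (simp add: cinner_prod_def cinner_add_left)
  show "cinner (a *\<^sub>C x) y = a * cinner x y"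
    by (simp add: cinner_prod_def scaleC_prod_def cinner_scaleC_left algebra_simps)
  show "Re (cinner x x) \<ge> 0" "Im (cinner x x) = 0"
    by (simp_all add: self)
  show "cinner x x = 0 \<longleftrightarrow> x = 0"
    by (simp add: self add_nonneg_eq_0_iff prod_eq_iff del: of_real_add)
  show "norm x = sqrt (Re (cinner x x))"
    by (simp add: self norm_prod_def)
qed

end

instance prod :: (chilbert_space, chilbert_space) chilbert_space ..

lemma pinner_eq_cinner: "pinner = cinner"
  by (simp add: fun_eq_iff pinner_def cinner_prod_def)

section \<open>Cauchy subsequences\<close>

lemma compact_closure_iff_Cauchy_subseq:
  fixes F :: "'a::complete_space set"
  shows "compact (closure F) \<longleftrightarrow>
    (\<forall>\<sigma>::nat \<Rightarrow> 'a. range \<sigma> \<subseteq> F \<longrightarrow> (\<exists>r. strict_mono r \<and> Cauchy (\<sigma> \<circ> r)))"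
proof -
  have "Met_TC.mcomplete TYPE('a)" using complete_UNIV by simp
  from Met_TC.mtotally_bounded_eq_compact_closure_of[OF this, of F]
  show ?thesis using Met_TC.mtotally_bounded_sequentially[of F] by simp
qed

lemma compact_closure_Cauchy_subseq:
  fixes F :: "'a::complete_space set" and \<sigma> :: "nat \<Rightarrow> 'a"
  assumes "compact (closure F)" and "range \<sigma> \<subseteq> F"
  shows "\<exists>r. strict_mono r \<and> Cauchy (\<sigma> \<circ> r)"
  using assms compact_closure_iff_Cauchy_subseq[of F] by blast

lemma compact_op_Cauchy_subseq:
  fixes K :: "'a::real_normed_vector \<Rightarrow> 'b::{real_normed_vector, complete_space}" and z :: "nat \<Rightarrow> 'a"
  assumes "compact_op K" and "\<And>n. norm (z n) \<le> M"
  shows "\<exists>r. strict_mono r \<and> Cauchy (\<lambda>n. K (z (r n)))"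
proof -
  have "bounded (range z)" using assms(2) by (auto simp: bounded_iff)
  then have "compact (closure (K ` range z))" using assms(1) by (simp add: compact_op_def)
  moreover have "range (\<lambda>n. K (z n)) \<subseteq> K ` range z" by auto
  ultimately show ?thesis
    using compact_closure_Cauchy_subseq[of "K ` range z" "\<lambda>n. K (z n)"] by (simp add: o_def)
qed

lemma Cauchy_if_power_dist_le:
  fixes X :: "nat \<Rightarrow> 'a::real_normed_vector" and Y :: "nat \<Rightarrow> 'b::real_normed_vector"
  assumes "Cauchy Y" and "k > 0" and le: "\<And>m n. norm (X m - X n) ^ k \<le> K * norm (Y m - Y n)"
  shows "Cauchy X"
proof (rule CauchyI)
  fix e :: real assume "e > 0"
  define K' where "K' = max K 1"
  have "e ^ k / K' > 0" using \<open>e > 0\<close> by (simp add: K'_def)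
  then obtain N where N: "\<forall>m\<ge>N. \<forall>n\<ge>N. norm (Y m - Y n) < e ^ k / K'"
    using \<open>Cauchy Y\<close> Cauchy_iff by blast
  have "norm (X m - X n) < e" if "m \<ge> N" "n \<ge> N" for m n
  proof -
    have "K \<le> K'" "K' > 0" by (simp_all add: K'_def)
    then have "norm (X m - X n) ^ k \<le> K' * norm (Y m - Y n)"
      using le[of m n] by (meson mult_right_mono norm_ge_zero order.trans)
    also have "\<dots> < e ^ k"
      using N that \<open>K' > 0\<close> by (simp add: pos_less_divide_eq mult.commute)
    finally show ?thesis using \<open>e > 0\<close> by (simp add: power_less_imp_less_base)
  qed
  then show "\<exists>N. \<forall>m\<ge>N. \<forall>n\<ge>N. norm (X m - X n) < e" by blast
qed

lemma Cauchy_if_power2_dist_le_null: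
  fixes X :: "nat \<Rightarrow> 'a::real_normed_vector"
  assumes "e \<longlonglongrightarrow> 0" and le: "\<And>m n. (norm (X m - X n))\<^sup>2 \<le> e m + e n"
  shows "Cauchy X"
proof (rule CauchyI)
  fix \<epsilon> :: real assume "\<epsilon> > 0"
  then have "\<epsilon>\<^sup>2 / 2 > 0" by simp
  from LIMSEQ_D[OF \<open>e \<longlonglongrightarrow> 0\<close> this]
  obtain N where N: "\<And>n. n \<ge> N \<Longrightarrow> \<bar>e n\<bar> < \<epsilon>\<^sup>2 / 2" by auto
  have "norm (X m - X n) < \<epsilon>" if "m \<ge> N" "n \<ge> N" for m n
  proof -
    have "(norm (X m - X n))\<^sup>2 < \<epsilon>\<^sup>2"
      using le[of m n] N[OF that(1)] N[OF that(2)] by linarith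
    then show ?thesis using \<open>\<epsilon> > 0\<close> by (simp add: power_less_imp_less_base)
  qed
  then show "\<exists>N. \<forall>m\<ge>N. \<forall>n\<ge>N. norm (X m - X n) < \<epsilon>" by blast
qed

lemma Cauchy_add:
  fixes X Y :: "nat \<Rightarrow> 'a::{real_normed_vector, complete_space}"
  shows "Cauchy X \<Longrightarrow> Cauchy Y \<Longrightarrow> Cauchy (\<lambda>n. X n + Y n)"
  by (simp add: Cauchy_convergent_iff convergent_add)

section \<open>Orthogonal projections\<close>

definition complex_subspace :: "'a::complex_vector set \<Rightarrow> bool" where
  "complex_subspace M \<longleftrightarrow> 0 \<in> M \<and> (\<forall>x\<in>M. \<forall>y\<in>M. x + y \<in> M) \<and> (\<forall>c. \<forall>x\<in>M. c *\<^sub>C x \<in> M)"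

definition closed_csubspace :: "'a::complex_inner set \<Rightarrow> bool" where
  "closed_csubspace M \<longleftrightarrow> complex_subspace M \<and> closed M"

lemma complex_subspace_0: "complex_subspace M \<Longrightarrow> 0 \<in> M"
  and complex_subspace_add: "complex_subspace M \<Longrightarrow> x \<in> M \<Longrightarrow> y \<in> M \<Longrightarrow> x + y \<in> M"
  and complex_subspace_scaleC: "complex_subspace M \<Longrightarrow> x \<in> M \<Longrightarrow> c *\<^sub>C x \<in> M"
  by (simp_all add: complex_subspace_def)

lemma complex_subspace_scaleR: "complex_subspace M \<Longrightarrow> x \<in> M \<Longrightarrow> r *\<^sub>R (x::'a::complex_vector) \<in> M"
  by (simp add: scaleR_scaleC complex_subspace_scaleC)

lemma complex_subspace_diff: "complex_subspace M \<Longrightarrow> x \<in> M \<Longrightarrow> y \<in> M \<Longrightarrow> x - y \<in> M"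
  using complex_subspace_add[of M x "(-1) *\<^sub>R y"] complex_subspace_scaleR[of M y "-1"] by simp

lemma complex_subspace_orth: "complex_subspace (orth (M::'a::complex_inner set))"
  unfolding complex_subspace_def orth_def by (auto simp: cinner_add_left cinner_scaleC_left)

lemma orthD: "x \<in> orth M \<Longrightarrow> y \<in> M \<Longrightarrow> cinner x y = 0"
  by (simp add: orth_def)

lemma closed_orth: "closed (orth (M::'a::complex_inner set))"
proof -
  have "closed {x::'a. Re (cinner x y) = 0}" for y
    by (intro closed_Collect_eq linear_continuous_on bounded_linear_Re_cinner_left continuous_on_const)
  moreover have "orth M = (\<Inter>y\<in>M. {x. Re (cinner x y) = 0} \<inter> {x. Re (cinner x (\<i> *\<^sub>C y)) = 0})"
    by (auto simp: orth_def cinner_eq_0_iff_Re)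
  ultimately show ?thesis by auto
qed

lemma closed_csubspace_orth: "closed_csubspace (orth M)"
  by (simp add: closed_csubspace_def complex_subspace_orth closed_orth)

lemma orth_if_nearest:
  fixes z p :: "'a::complex_inner"
  assumes M: "complex_subspace M" and p: "p \<in> M"
    and nearest: "\<And>q. q \<in> M \<Longrightarrow> norm (z - p) \<le> norm (z - q)"
  shows "z - p \<in> orth M"
proof -
  have Re_0: "Re (cinner (z - p) q) = 0" if q: "q \<in> M" for q
  proof -
    define R where "R = Re (cinner (z - p) q)"
    define Q where "Q = (norm q)\<^sup>2"
    \<comment> \<open>unless \<open>R = 0\<close>, the point \<open>p + t q\<close> of \<open>M\<close> would be strictly nearer to \<open>z\<close>\<close>
    define t where "t = R / (Q + 1)"
    have "p + t *\<^sub>R q \<in> M" using M p q by (simp add: complex_subspace_add complex_subspace_scaleR)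
    then have "(norm (z - p))\<^sup>2 \<le> (norm ((z - p) - t *\<^sub>R q))\<^sup>2"
      using nearest by (simp add: algebra_simps)
    then have "2 * t * R \<le> t\<^sup>2 * Q"
      by (simp add: power2_norm_diff cinner_scaleR_right R_def Q_def power_mult_distrib)
    moreover have "Q \<ge> 0" by (simp add: Q_def)
    then have "R = t * (Q + 1)" by (simp add: t_def)
    ultimately have "t\<^sup>2 * (Q + 2) \<le> 0"
      by (simp add: power2_eq_square algebra_simps)
    with \<open>Q \<ge> 0\<close> have "t = 0"
      by (simp add: mult_le_0_iff)
    with \<open>R = t * (Q + 1)\<close> show ?thesis
      by (simp add: R_def)
  qed
  show ?thesis
    unfolding orth_def using Re_0 complex_subspace_scaleC[OF M] by (auto simp: cinner_eq_0_iff_Re)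
qed


lemma parallelogram_law:
  "(norm ((a::'a::complex_inner) + b))\<^sup>2 + (norm (a - b))\<^sup>2 = 2 * (norm a)\<^sup>2 + 2 * (norm b)\<^sup>2"
  by (simp add: power2_norm_add power2_norm_diff)

lemma power2_norm_diff_le_midpoint:
  fixes z a b :: "'a::complex_inner"
  assumes "d \<le> (norm (z - (1/2) *\<^sub>R (a + b)))\<^sup>2"
  shows "(norm (a - b))\<^sup>2 \<le> 2 * (norm (z - a))\<^sup>2 + 2 * (norm (z - b))\<^sup>2 - 4 * d"
proof -
  have "(z - a) + (z - b) = 2 *\<^sub>R (z - (1/2) *\<^sub>R (a + b))"
    by (simp add: algebra_simps scaleR_2)
  then have "(norm ((z - a) + (z - b)))\<^sup>2 = 4 * (norm (z - (1/2) *\<^sub>R (a + b)))\<^sup>2"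
    by (simp add: power_mult_distrib)
  then show ?thesis
    using parallelogram_law[of "z - a" "z - b"] assms by (simp add: norm_minus_commute)
qed

lemma nearest_point_exists:
  fixes z :: "'a::chilbert_space"
  assumes "closed_csubspace M"
  obtains p where "p \<in> M" "\<And>q. q \<in> M \<Longrightarrow> norm (z - p) \<le> norm (z - q)"
proof -
  have M: "complex_subspace M" "closed M" using assms by (simp_all add: closed_csubspace_def)
  define d where "d = (INF q\<in>M. (norm (z - q))\<^sup>2)"
  have d_le: "d \<le> (norm (z - q))\<^sup>2" if "q \<in> M" for q
    unfolding d_def using that by (intro cINF_lower bdd_belowI2[of _ 0]) auto
  have "\<exists>q\<in>M. (norm (z - q))\<^sup>2 < d + 1 / real (Suc n)" for n
  proof -
    have "(\<lambda>q. (norm (z - q))\<^sup>2) ` M \<noteq> {}" using complex_subspace_0[OF M(1)] by blast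
    moreover have "(INF q\<in>M. (norm (z - q))\<^sup>2) < d + 1 / real (Suc n)" by (simp add: d_def)
    ultimately show ?thesis by (rule cInf_lessD[THEN bexE]) blast
  qed
  then obtain qs where qs: "\<And>n. qs n \<in> M" "\<And>n. (norm (z - qs n))\<^sup>2 < d + 1 / real (Suc n)"
    by metis
  have null: "(\<lambda>n. c / real (Suc n)) \<longlonglongrightarrow> 0" for c :: real
    using LIMSEQ_Suc[OF lim_const_over_n[of c]] by simp
  have "(norm (qs m - qs n))\<^sup>2 \<le> 2 / real (Suc m) + 2 / real (Suc n)" for m n
  proof -
    have "(1/2) *\<^sub>R (qs m + qs n) \<in> M"
      using M(1) qs(1) by (simp add: complex_subspace_add complex_subspace_scaleR)
    from power2_norm_diff_le_midpoint[OF d_le[OF this]] show ?thesis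
      using qs(2)[of m] qs(2)[of n] by linarith
  qed
  with null have "Cauchy qs" by (rule Cauchy_if_power2_dist_le_null)
  then obtain p where lim: "qs \<longlonglongrightarrow> p" by (auto simp: Cauchy_convergent_iff convergent_def)
  have "p \<in> M" using M(2) qs(1) lim closed_sequential_limits by blast
  have "(\<lambda>n. (norm (z - qs n))\<^sup>2) \<longlonglongrightarrow> (norm (z - p))\<^sup>2"
    by (intro tendsto_intros lim)
  moreover have "(\<lambda>n. d + 1 / real (Suc n)) \<longlonglongrightarrow> d"
    using tendsto_add[OF tendsto_const null] by simp
  ultimately have "(norm (z - p))\<^sup>2 \<le> d"
    using qs(2) by (intro LIMSEQ_le) (auto intro: less_imp_le)
  then have "norm (z - p) \<le> norm (z - q)" if "q \<in> M" for q
    using d_le[OF that] by (simp add: power2_le_imp_le)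
  with \<open>p \<in> M\<close> show ?thesis by (rule that)
qed

lemma oproj_unique:
  fixes z :: "'a::complex_inner"
  assumes M: "complex_subspace M"
    and "p \<in> M" "z - p \<in> orth M" and "p' \<in> M" "z - p' \<in> orth M"
  shows "p = p'"
proof -
  have "p - p' \<in> M" using assms complex_subspace_diff by blast
  then have "cinner (z - p') (p - p') = 0" "cinner (z - p) (p - p') = 0"
    using assms(3,5) by (auto simp: orth_def)
  then have "cinner ((z - p') - (z - p)) (p - p') = 0" by (simp add: cinner_diff_left)
  then have "cinner (p - p') (p - p') = 0" by simp
  then show ?thesis by (simp add: cinner_eq_zero)
qed

lemma oproj_characterization:
  fixes z :: "'a::chilbert_space"
  assumes "closed_csubspace M"
  shows "oproj M z \<in> M \<and> z - oproj M z \<in> orth M"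
proof -
  have M: "complex_subspace M" using assms by (simp add: closed_csubspace_def)
  obtain p where "p \<in> M" "z - p \<in> orth M"
    using nearest_point_exists[OF assms, of z] orth_if_nearest[OF M] by metis
  then have "\<exists>!p. p \<in> M \<and> z - p \<in> orth M"
    using oproj_unique[OF M] by blast
  then have "(THE p. p \<in> M \<and> z - p \<in> orth M) \<in> M \<and> z - (THE p. p \<in> M \<and> z - p \<in> orth M) \<in> orth M"
    by (rule theI')
  moreover have "oproj M z = (THE p. p \<in> M \<and> z - p \<in> orth M)"
    by (simp add: oproj_def orth_def)
  ultimately show ?thesis by simp
qed

lemma oproj_in: "closed_csubspace M \<Longrightarrow> oproj M (z::'a::chilbert_space) \<in> M"
  and oproj_orth: "closed_csubspace M \<Longrightarrow> z - oproj M (z::'a::chilbert_space) \<in> orth M"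
  using oproj_characterization by blast+

lemma oproj_eqI:
  fixes z :: "'a::chilbert_space"
  assumes "closed_csubspace M" "p \<in> M" "z - p \<in> orth M"
  shows "oproj M z = p"
  using oproj_unique assms oproj_in oproj_orth closed_csubspace_def by metis

lemma oproj_eq_self: "closed_csubspace M \<Longrightarrow> (q::'a::chilbert_space) \<in> M \<Longrightarrow> oproj M q = q"
  by (rule oproj_eqI) (auto simp: orth_def)

lemma norm_oproj_le:
  fixes z :: "'a::chilbert_space"
  assumes "closed_csubspace M"
  shows "norm (oproj M z) \<le> norm z" and "norm (z - oproj M z) \<le> norm z"
proof -
  have "cinner (z - oproj M z) (oproj M z) = 0"
    using oproj_in[OF assms] oproj_orth[OF assms] by (auto simp: orth_def)
  from pythagoras[OF this]
  have "(norm z)\<^sup>2 = (norm (z - oproj M z))\<^sup>2 + (norm (oproj M z))\<^sup>2" by simp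
  then show "norm (oproj M z) \<le> norm z" "norm (z - oproj M z) \<le> norm z"
    by (auto intro: power2_le_imp_le)
qed

lemma bounded_linear_oproj:
  assumes M: "closed_csubspace (M::'a::chilbert_space set)"
  shows "bounded_linear (oproj M)"
proof (rule bounded_linear_intro[where K = 1])
  have sub: "complex_subspace M" using M by (simp add: closed_csubspace_def)
  note orth = complex_subspace_orth[of M] and P = oproj_in[OF M] oproj_orth[OF M]
  show "oproj M (x + y) = oproj M x + oproj M y" for x y
  proof (rule oproj_eqI[OF M])
    show "oproj M x + oproj M y \<in> M" using P complex_subspace_add[OF sub] by blast
    have "x + y - (oproj M x + oproj M y) = (x - oproj M x) + (y - oproj M y)" by simp
    then show "x + y - (oproj M x + oproj M y) \<in> orth M" using P complex_subspace_add[OF orth] by metis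
  qed
  show "oproj M (r *\<^sub>R x) = r *\<^sub>R oproj M x" for r x
  proof (rule oproj_eqI[OF M])
    show "r *\<^sub>R oproj M x \<in> M" using P complex_subspace_scaleR[OF sub] by blast
    have "r *\<^sub>R x - r *\<^sub>R oproj M x = r *\<^sub>R (x - oproj M x)" by (simp add: algebra_simps)
    then show "r *\<^sub>R x - r *\<^sub>R oproj M x \<in> orth M" using P complex_subspace_scaleR[OF orth] by metis
  qed
  show "norm (oproj M x) \<le> norm x * 1" for x using norm_oproj_le[OF M] by simp
qed

lemma oproj_diff: "closed_csubspace M \<Longrightarrow> oproj M (x - y) = oproj M x - oproj M (y::'a::chilbert_space)"
  by (simp add: bounded_linear_oproj bounded_linear.linear linear_diff)

lemma oproj_diff_mem:
  fixes z :: "'a::chilbert_space"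
  assumes "closed_csubspace M" "q \<in> M"
  shows "oproj M (q - z) = q - oproj M z"
  using assms by (simp add: oproj_diff oproj_eq_self)

lemma oproj_residual_eq:
  fixes p q :: "'a::chilbert_space"
  assumes "closed_csubspace M" "p - q \<in> M"
  shows "p - oproj M p = q - oproj M q"
proof -
  have "p - q = oproj M p - oproj M q" using oproj_eq_self[OF assms] oproj_diff[OF assms(1)] by metis
  then show ?thesis by (simp add: algebra_simps)
qed

lemma power2_norm_oproj_le:
  fixes u :: "'a::chilbert_space"
  assumes M: "closed_csubspace M" and N: "closed_csubspace N" and u: "u \<in> orth N"
  shows "(norm (oproj M u))\<^sup>2 \<le> norm u * norm (oproj M u - oproj N (oproj M u))"
proof -
  let ?p = "oproj M u"
  have "cinner (u - ?p) ?p = 0" using orthD[OF oproj_orth[OF M] oproj_in[OF M]] .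
  moreover have "cinner u (oproj N ?p) = 0" using orthD[OF u oproj_in[OF N]] .
  ultimately have "(norm ?p)\<^sup>2 = Re (cinner u (?p - oproj N ?p))"
    by (simp add: power2_norm_eq_cinner cinner_diff_left cinner_diff_right)
  also have "\<dots> \<le> norm u * norm (?p - oproj N ?p)" by (rule Re_cinner_le_norm)
  finally show ?thesis .
qed

lemma power2_norm_oproj_diff_le:
  fixes u v :: "'a::chilbert_space"
  assumes M: "closed_csubspace M" and N: "closed_csubspace N" and "u \<in> orth N" "v \<in> orth N"
  shows "(norm (oproj M u - oproj M v))\<^sup>2
    \<le> norm (u - v) * norm ((oproj M u - oproj N (oproj M u)) - (oproj M v - oproj N (oproj M v)))"
proof -
  have "u - v \<in> orth N" using assms(3,4) by (rule complex_subspace_diff[OF complex_subspace_orth])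
  from power2_norm_oproj_le[OF M N this] show ?thesis
    by (simp add: oproj_diff[OF M] oproj_diff[OF N] algebra_simps)
qed

lemma bounded_linear_oproj_residual:
  assumes "closed_csubspace (M::'a::chilbert_space set)" and "bounded_linear f"
  shows "bounded_linear (\<lambda>x. f x - oproj M (f x))"
  using assms by (intro bounded_linear_sub bounded_linear_compose[OF bounded_linear_oproj])

section \<open>Linear relations\<close>

lemma oproj2_eq_oproj: "oproj2 = oproj"
  by (simp add: fun_eq_iff oproj2_def oproj_def pinner_eq_cinner)

definition graph_ball_image :: "('a::real_normed_vector \<times> 'a) set \<Rightarrow> ('a \<times> 'a) set \<Rightarrow> real \<Rightarrow> 'a set"
  where "graph_ball_image U V N = {f. \<exists>x v. (x, v) \<in> V \<and> norm x + norm v \<le> N \<and> (x, f) \<in> U}"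

lemma rel_compact_Cauchy_subseq:
  fixes U V :: "('a::{real_normed_vector, complete_space} \<times> 'a) set" and f :: "nat \<Rightarrow> 'a"
  assumes "rel_compact U V" and "\<And>n. f n \<in> graph_ball_image U V N"
  shows "\<exists>r. strict_mono r \<and> Cauchy (f \<circ> r)"
proof -
  define B where "B = {(x, v) \<in> V. norm x + norm v \<le> N}"
  have "B \<subseteq> V" "\<forall>x v. (x, v) \<in> B \<longrightarrow> norm x + norm v \<le> N"
    by (auto simp: B_def)
  then have "compact (closure {f. \<exists>x v. (x, v) \<in> B \<and> (x, f) \<in> U})"
    using assms(1) unfolding rel_compact_def by blast
  moreover have "range f \<subseteq> {f. \<exists>x v. (x, v) \<in> B \<and> (x, f) \<in> U}"
    using assms(2) by (auto simp: B_def graph_ball_image_def)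
  ultimately show ?thesis by (rule compact_closure_Cauchy_subseq)
qed

lemma rel_compactI:
  fixes U V :: "('a::{real_normed_vector, complete_space} \<times> 'a) set"
  assumes "rdom V \<subseteq> rdom U"
    and "\<And>N f :: nat \<Rightarrow> 'a. (\<And>n. f n \<in> graph_ball_image U V N) \<Longrightarrow> \<exists>r. strict_mono r \<and> Cauchy (f \<circ> r)"
  shows "rel_compact U V"
  unfolding rel_compact_def
proof (intro conjI allI impI)
  fix B assume B: "B \<subseteq> V" and "\<exists>N. \<forall>x v. (x, v) \<in> B \<longrightarrow> norm x + norm v \<le> N"
  then obtain N where "\<forall>x v. (x, v) \<in> B \<longrightarrow> norm x + norm v \<le> N" by blast
  with B have "{f. \<exists>x v. (x, v) \<in> B \<and> (x, f) \<in> U} \<subseteq> graph_ball_image U V N"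
    unfolding graph_ball_image_def by blast
  then show "compact (closure {f. \<exists>x v. (x, v) \<in> B \<and> (x, f) \<in> U})"
    unfolding compact_closure_iff_Cauchy_subseq using assms(2) by blast
qed (fact assms(1))

lemma graph_ball_image_mono: "N \<le> N' \<Longrightarrow> graph_ball_image U V N \<subseteq> graph_ball_image U V N'"
  by (force simp: graph_ball_image_def)


lemma closed_csubspace_if_closed_subspace: "closed_subspace T \<Longrightarrow> closed_csubspace T"
  unfolding closed_subspace_def is_subspace_def closed_csubspace_def complex_subspace_def
  by (auto simp: scaleC_prod_def zero_prod_def)

lemma closed_subspace_zero: "closed_subspace T \<Longrightarrow> (0, 0) \<in> T"
  and closed_subspace_add: "closed_subspace T \<Longrightarrow> (x, f) \<in> T \<Longrightarrow> (y, g) \<in> T \<Longrightarrow> (x + y, f + g) \<in> T"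
  and closed_subspace_scaleC: "closed_subspace T \<Longrightarrow> (x, f) \<in> T \<Longrightarrow> (c *\<^sub>C x, c *\<^sub>C f) \<in> T"
  by (simp_all add: closed_subspace_def is_subspace_def)

lemma closed_subspace_diff:
  assumes "closed_subspace T" "(x, f) \<in> T" "(y, g) \<in> T"
  shows "(x - y, f - g) \<in> T"
  using complex_subspace_diff[of T "(x, f)" "(y, g)"] assms
    closed_csubspace_if_closed_subspace[OF assms(1)]
  by (simp add: closed_csubspace_def)

lemma closed_csubspace_img_zero:
  assumes "closed_subspace T"
  shows "closed_csubspace (img T (0::'a::complex_inner))"
proof -
  have "img T 0 = (\<lambda>g. (0::'a, g)) -` T" by (auto simp: img_def)
  then have "closed (img T 0)"
    using assms by (auto simp: closed_subspace_def intro!: closed_vimage continuous_intros)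
  moreover have "complex_subspace (img T 0)"
    using closed_subspace_zero[OF assms] closed_subspace_add[OF assms, of 0 _ 0]
      closed_subspace_scaleC[OF assms, of 0]
    by (auto simp: complex_subspace_def img_def)
  ultimately show ?thesis by (simp add: closed_csubspace_def)
qed

lemma Tpart_iff: "(x, f) \<in> Tpart T \<longleftrightarrow> (x, f) \<in> T \<and> f \<in> orth (img T 0)"
  by (auto simp: Tpart_def Tinf_def img_def pinner_def orth_def)

lemma Tpart_subset: "Tpart T \<subseteq> T"
  by (auto simp: Tpart_def)

lemma Tpart_oproj_residual:
  fixes T :: "('a::chilbert_space \<times> 'a) set"
  assumes T: "closed_subspace T" and "(x, f) \<in> T"
  shows "(x, f - oproj (img T 0) f) \<in> Tpart T"
proof -
  note M = closed_csubspace_img_zero[OF T]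
  have "(0, oproj (img T 0) f) \<in> T" using oproj_in[OF M] by (simp add: img_def)
  from closed_subspace_diff[OF T assms(2) this] show ?thesis
    using oproj_orth[OF M] by (simp add: Tpart_iff)
qed

lemma rdom_Tpart: "closed_subspace T \<Longrightarrow> rdom (Tpart T) = rdom (T::('a::chilbert_space \<times> 'a) set)"
  unfolding rdom_def using Tpart_oproj_residual Tpart_subset by fastforce

lemma rel_sumI: "(x, f) \<in> S \<Longrightarrow> (x, g) \<in> A \<Longrightarrow> (x, f + g) \<in> rel_sum S A"
  by (auto simp: rel_sum_def)

lemma img_zero_rel_sum_right: "closed_subspace S \<Longrightarrow> img A 0 \<subseteq> img (rel_sum S A) 0"
  using rel_sumI[of 0 0 S _ A] closed_subspace_zero[of S] by (auto simp: img_def)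

lemma hermitian_rdom_orth_img:
  assumes "hermitian T" and "x \<in> rdom T"
  shows "x \<in> orth (img T 0)"
  unfolding orth_def
proof (intro CollectI ballI)
  fix m assume "m \<in> img T 0"
  then have "(0, m) \<in> adj T" using assms(1) by (auto simp: hermitian_def img_def)
  moreover obtain t where "(x, t) \<in> T" using assms(2) by (auto simp: rdom_def)
  ultimately have "cinner m x = 0" by (auto simp: adj_def)
  then show "cinner x m = 0" by (simp add: cinner_commute_eq_0)
qed

lemma reduces_Tpart_into_orth:
  fixes A :: "('a::chilbert_space \<times> 'a) set"
  assumes A: "closed_subspace A" and red: "reduces (orth M) A" and sub: "img A 0 \<subseteq> M"
    and x: "x \<in> orth M" and xf: "(x, f) \<in> Tpart A"
  shows "f \<in> orth M"
proof -
  let ?Q = "oproj (orth M)"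
  have "(?Q x, ?Q f) \<in> A" using red xf Tpart_subset unfolding reduces_def by blast
  then have "(x, ?Q f) \<in> A" using oproj_eq_self[OF closed_csubspace_orth x] by simp
  moreover have "(x, f) \<in> A" using xf Tpart_subset by blast
  ultimately have "(x - x, f - ?Q f) \<in> A" using closed_subspace_diff[OF A] by blast
  then have "f - ?Q f \<in> img A 0" by (simp add: img_def)
  have "?Q f \<in> orth M" by (rule oproj_in[OF closed_csubspace_orth])
  have "cinner f (f - ?Q f) = 0"
    using orthD[OF _ \<open>f - ?Q f \<in> img A 0\<close>] xf by (simp add: Tpart_iff)
  moreover have "cinner (?Q f) (f - ?Q f) = 0"
    using orthD[OF \<open>?Q f \<in> orth M\<close>] \<open>f - ?Q f \<in> img A 0\<close> sub by blast
  ultimately have "cinner (f - ?Q f) (f - ?Q f) = 0" by (simp add: cinner_diff_left)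
  with \<open>?Q f \<in> orth M\<close> show ?thesis by (simp add: cinner_eq_zero)
qed

text \<open>\<open>resolvent T l y\<close> is \<open>(l I - T)\<^sup>-\<^sup>1 y\<close>; it is meaningful for \<open>l \<in> resolvent_set T\<close>.\<close>
definition resolvent :: "('a::complex_inner \<times> 'a) set \<Rightarrow> complex \<Rightarrow> 'a \<Rightarrow> 'a" where
  "resolvent T l y = (THE x. \<exists>f. (x, f) \<in> T \<and> l *\<^sub>C x - f = y)"

lemma resolvent_setD:
  assumes "l \<in> resolvent_set T"
  shows "rdom {(l *\<^sub>C x - f, x) | x f. (x, f) \<in> T} = UNIV"
    and "\<And>y x x'. (y, x) \<in> {(l *\<^sub>C x - f, x) | x f. (x, f) \<in> T}
      \<Longrightarrow> (y, x') \<in> {(l *\<^sub>C x - f, x) | x f. (x, f) \<in> T} \<Longrightarrow> x = x'"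
    and "\<exists>C. \<forall>y x. (y, x) \<in> {(l *\<^sub>C x - f, x) | x f. (x, f) \<in> T} \<longrightarrow> norm x \<le> C * norm y"
  using assms unfolding resolvent_set_def Let_def mem_Collect_eq by blast+

lemma resolvent_set_surj:
  assumes "l \<in> resolvent_set T"
  obtains x f where "(x, f) \<in> T" "l *\<^sub>C x - f = y"
proof -
  have "y \<in> rdom {(l *\<^sub>C x - f, x) | x f. (x, f) \<in> T}"
    using resolvent_setD(1)[OF assms] by simp
  then show ?thesis using that by (auto simp: rdom_def)
qed

lemma resolvent_set_inj:
  assumes "l \<in> resolvent_set T" "(x, f) \<in> T" "(x', f') \<in> T" "l *\<^sub>C x - f = l *\<^sub>C x' - f'"
  shows "x = x'"
  using resolvent_setD(2)[OF assms(1), of "l *\<^sub>C x - f" x x'] assms(2-4) by blast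

lemma resolvent_set_bounded:
  assumes "l \<in> resolvent_set T"
  obtains C where "\<And>x f. (x, f) \<in> T \<Longrightarrow> norm x \<le> C * norm (l *\<^sub>C x - f)"
  using resolvent_setD(3)[OF assms] by blast

lemma resolvent_eqI:
  assumes "l \<in> resolvent_set T" "(x, f) \<in> T" "l *\<^sub>C x - f = y"
  shows "resolvent T l y = x"
  unfolding resolvent_def
proof (rule the_equality)
  show "\<exists>f. (x, f) \<in> T \<and> l *\<^sub>C x - f = y" using assms(2,3) by blast
  show "x' = x" if "\<exists>f. (x', f) \<in> T \<and> l *\<^sub>C x' - f = y" for x'
    using that assms resolvent_set_inj by metis
qed

lemma resolvent_in_graph:
  assumes "l \<in> resolvent_set T"
  obtains f where "(resolvent T l y, f) \<in> T" "l *\<^sub>C resolvent T l y - f = y"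
proof -
  obtain x f where "(x, f) \<in> T" "l *\<^sub>C x - f = y" using resolvent_set_surj[OF assms] .
  with resolvent_eqI[OF assms this] show ?thesis using that by simp
qed

lemma bounded_linear_resolvent:
  assumes T: "closed_subspace T" and l: "l \<in> resolvent_set T"
  shows "bounded_linear (resolvent T l)"
proof -
  obtain C where C: "\<And>x f. (x, f) \<in> T \<Longrightarrow> norm x \<le> C * norm (l *\<^sub>C x - f)"
    using resolvent_set_bounded[OF l] by blast
  show ?thesis
  proof (rule bounded_linear_intro[where K = C])
    fix y z :: 'a and r :: real
    obtain f where f: "(resolvent T l y, f) \<in> T" "l *\<^sub>C resolvent T l y - f = y"
      using resolvent_in_graph[OF l] .
    obtain g where g: "(resolvent T l z, g) \<in> T" "l *\<^sub>C resolvent T l z - g = z"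
      using resolvent_in_graph[OF l] .
    have "l *\<^sub>C (resolvent T l y + resolvent T l z) - (f + g)
        = (l *\<^sub>C resolvent T l y - f) + (l *\<^sub>C resolvent T l z - g)"
      by (simp add: scaleC_add_right algebra_simps)
    then have "l *\<^sub>C (resolvent T l y + resolvent T l z) - (f + g) = y + z"
      by (simp only: f(2) g(2))
    with closed_subspace_add[OF T f(1) g(1)]
    show "resolvent T l (y + z) = resolvent T l y + resolvent T l z"
      by (rule resolvent_eqI[OF l])
    have "l *\<^sub>C (r *\<^sub>R resolvent T l y) - r *\<^sub>R f = r *\<^sub>R (l *\<^sub>C resolvent T l y - f)"
      by (simp add: scaleR_scaleC scaleC_diff_right scaleC_scaleC mult.commute)
    then have "l *\<^sub>C (r *\<^sub>R resolvent T l y) - r *\<^sub>R f = r *\<^sub>R y"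
      by (simp only: f(2))
    with closed_subspace_scaleC[OF T f(1), of "of_real r"]
    show "resolvent T l (r *\<^sub>R y) = r *\<^sub>R resolvent T l y"
      by (intro resolvent_eqI[OF l]) (simp_all add: scaleR_scaleC)
    show "norm (resolvent T l y) \<le> norm y * C"
      using C[OF f(1)] f(2) by (simp add: mult.commute)
  qed
qed

lemma oproj_residual_shift:
  fixes T :: "('a::chilbert_space \<times> 'a) set"
  assumes "closed_subspace T" and "(x, f + g) \<in> T"
  shows "oproj T (x, f) - (x, f) = (0, g) - oproj T (0, g)"
proof -
  have "oproj T ((x, f + g) - (0, g)) = (x, f + g) - oproj T (0, g)"
    using oproj_diff_mem[OF closed_csubspace_if_closed_subspace[OF assms(1)] assms(2)] .
  then have "oproj T (x, f) = (x, f + g) - oproj T (0, g)" by simp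
  then show ?thesis by (simp add: algebra_simps)
qed

lemma rel_sum_resolvent_decomposition:
  fixes T S A :: "('a::chilbert_space \<times> 'a) set"
  assumes T: "closed_subspace T" and A: "closed_subspace A"
    and sum: "T = rel_sum S A" and dom: "rdom S \<subseteq> rdom A"
    and lT: "l \<in> resolvent_set T" and lS: "l \<in> resolvent_set S" and xf: "(x, f) \<in> T"
  obtains x' f' g where "(x', f') \<in> S" "l *\<^sub>C x' - f' = l *\<^sub>C x - f" "(x', g) \<in> Tpart A"
    "x = x' + resolvent T l g" "f = f' + l *\<^sub>C resolvent T l g"
proof -
  obtain x' f' where xf': "(x', f') \<in> S" "l *\<^sub>C x' - f' = l *\<^sub>C x - f"
    using resolvent_set_surj[OF lS] by metis
  obtain g where g: "(x', g) \<in> Tpart A"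
    using xf' dom rdom_Tpart[OF A] by (auto simp: rdom_def)
  have "(x', f' + g) \<in> T" using xf' g Tpart_subset sum by (auto intro: rel_sumI)
  moreover have "l *\<^sub>C x' - (f' + g) = (l *\<^sub>C x - f) - g"
    unfolding xf'(2)[symmetric] by (simp add: algebra_simps)
  ultimately have "resolvent T l ((l *\<^sub>C x - f) - g) = x'" by (rule resolvent_eqI[OF lT])
  moreover have "resolvent T l (l *\<^sub>C x - f) = x" by (rule resolvent_eqI[OF lT xf refl])
  moreover have "resolvent T l ((l *\<^sub>C x - f) - g) = resolvent T l (l *\<^sub>C x - f) - resolvent T l g"
    by (rule linear_diff[OF bounded_linear.linear[OF bounded_linear_resolvent[OF T lT]]])
  ultimately have "x - resolvent T l g = x'" by simp
  then have x: "x = x' + resolvent T l g" by (simp add: diff_eq_eq)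
  have "f' + l *\<^sub>C (x - x') = l *\<^sub>C x - (l *\<^sub>C x' - f')"
    by (simp add: scaleC_diff_right algebra_simps)
  then have "f = f' + l *\<^sub>C (x - x')" unfolding xf'(2) by simp
  with x have "f = f' + l *\<^sub>C resolvent T l g" by simp
  with xf' g x show ?thesis by (rule that)
qed

section \<open>Part (i): relative compactness of \<open>A\<^sub>s\<close> gives a compact perturbation\<close>

lemma oproj_minus_self_Cauchy_subseq:
  fixes T S A :: "('a::chilbert_space \<times> 'a) set" and a :: "nat \<Rightarrow> 'a \<times> 'a"
  assumes T: "closed_subspace T" and S: "closed_subspace S" and A: "closed_subspace A"
    and sum: "T = rel_sum S A" and dom: "rdom S \<subseteq> rdom A"
    and rc: "rel_compact (Tpart A) (Tpart S)"
    and a: "\<And>n. a n \<in> S" "\<And>n. norm (a n) \<le> M"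
  shows "\<exists>r. strict_mono r \<and> Cauchy (\<lambda>n. oproj T (a (r n)) - a (r n))"
proof -
  define E where "E g = (0, g) - oproj T (0, g)" for g :: 'a
  have "\<exists>g. g \<in> graph_ball_image (Tpart A) (Tpart S) (2 * M) \<and> oproj T (a n) - a n = E g" for n
  proof -
    obtain x f where af: "a n = (x, f)" by fastforce
    then have xf: "(x, f) \<in> S" using a(1) by metis
    define s where "s = f - oproj (img S 0) f"
    have xs: "(x, s) \<in> Tpart S" unfolding s_def by (rule Tpart_oproj_residual[OF S xf])
    have "norm s \<le> norm f" unfolding s_def by (rule norm_oproj_le(2)[OF closed_csubspace_img_zero[OF S]])
    then have bound: "norm x + norm s \<le> 2 * M"
      using a(2)[of n] norm_fst_le[of x f] norm_snd_le[of f x] af by simp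
    obtain g where g: "(x, g) \<in> Tpart A" using dom rdom_Tpart[OF A] xf by (auto simp: rdom_def)
    have "(x, f + g) \<in> T" using xf g Tpart_subset sum by (auto intro: rel_sumI)
    then have "oproj T (a n) - a n = E g" unfolding af E_def by (rule oproj_residual_shift[OF T])
    moreover have "g \<in> graph_ball_image (Tpart A) (Tpart S) (2 * M)"
      using xs g bound by (auto simp: graph_ball_image_def)
    ultimately show ?thesis by blast
  qed
  then obtain g where "\<forall>n. g n \<in> graph_ball_image (Tpart A) (Tpart S) (2 * M)
      \<and> oproj T (a n) - a n = E (g n)"
    by (rule choice[OF allI, THEN exE])
  note g = this[rule_format, THEN conjunct1] and Eg = this[rule_format, THEN conjunct2]
  obtain r where r: "strict_mono r" "Cauchy (g \<circ> r)" using rel_compact_Cauchy_subseq[where f = g, OF rc g] by blast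
  have "bounded_linear E" unfolding E_def
    using closed_csubspace_if_closed_subspace[OF T]
    by (intro bounded_linear_oproj_residual bounded_linear_Pair bounded_linear_zero bounded_linear_ident)
  from bounded_linear.Cauchy[OF this r(2)] r(1) show ?thesis by (auto simp: Eg)
qed

lemma rel_sum_resolvent_decomposition_bounded:
  fixes T S A :: "('a::chilbert_space \<times> 'a) set"
  assumes T: "closed_subspace T" and S: "closed_subspace S" and A: "closed_subspace A"
    and sum: "T = rel_sum S A" and dom: "rdom S \<subseteq> rdom A"
    and lT: "l \<in> resolvent_set T" and lS: "l \<in> resolvent_set S"
  obtains C where "C \<ge> 0" and "\<And>p. p \<in> T \<Longrightarrow> \<exists>g. g \<in> graph_ball_image (Tpart A) (Tpart S) (C * norm p)
      \<and> p - (resolvent T l g, l *\<^sub>C resolvent T l g) \<in> S"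
proof -
  obtain K where K: "K \<ge> 0" "\<And>y. norm (resolvent S l y) \<le> norm y * K"
    using bounded_linear.nonneg_bounded[OF bounded_linear_resolvent[OF S lS]] by blast
  define C where "C = (K + norm l * K + 1) * (norm l + 1)"
  have "\<exists>g. g \<in> graph_ball_image (Tpart A) (Tpart S) (C * norm (x, f))
      \<and> (x, f) - (resolvent T l g, l *\<^sub>C resolvent T l g) \<in> S"
    if xf: "(x, f) \<in> T" for x f
  proof -
    obtain x' f' g where d: "(x', f') \<in> S" "l *\<^sub>C x' - f' = l *\<^sub>C x - f" "(x', g) \<in> Tpart A"
      "x = x' + resolvent T l g" "f = f' + l *\<^sub>C resolvent T l g"
      using rel_sum_resolvent_decomposition[OF T A sum dom lT lS xf] by blast
    define y where "y = l *\<^sub>C x - f"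
    have ny: "norm y \<le> (norm l + 1) * norm (x, f)" unfolding y_def by (rule norm_scaleC_diff_le)
    have "resolvent S l y = x'" using d(1,2) by (intro resolvent_eqI[OF lS]) (simp_all add: y_def)
    then have nx': "norm x' \<le> K * norm y" using K(2)[of y] by (simp add: mult.commute)
    define s where "s = f' - oproj (img S 0) f'"
    have xs: "(x', s) \<in> Tpart S" unfolding s_def by (rule Tpart_oproj_residual[OF S d(1)])
    have ns: "norm s \<le> norm f'"
      unfolding s_def by (rule norm_oproj_le(2)[OF closed_csubspace_img_zero[OF S]])
    have "f' = l *\<^sub>C x' - y" unfolding y_def d(2)[symmetric] by simp
    then have nf': "norm f' \<le> norm l * norm x' + norm y"
      using norm_triangle_ineq4[of "l *\<^sub>C x'" y] by (simp add: norm_scaleC)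
    have "norm l * norm x' \<le> norm l * (K * norm y)" by (rule mult_left_mono[OF nx']) simp
    then have "norm x' + norm s \<le> K * norm y + norm l * (K * norm y) + norm y"
      using nx' ns nf' by linarith
    also have "\<dots> = (K + norm l * K + 1) * norm y" by (simp add: algebra_simps)
    also have "\<dots> \<le> C * norm (x, f)"
      unfolding C_def using ny K(1) by (simp add: mult.assoc mult_left_mono)
    finally have "norm x' + norm s \<le> C * norm (x, f)" .
    moreover have "(x, f) - (resolvent T l g, l *\<^sub>C resolvent T l g) = (x', f')" using d(4,5) by simp
    ultimately show ?thesis using xs d(1,3) unfolding graph_ball_image_def by auto
  qed
  moreover have "C \<ge> 0" using K(1) by (simp add: C_def)
  ultimately show ?thesis using that by (metis prod.exhaust)
qed

lemma oproj_orth_Cauchy_subseq: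
  fixes T S A :: "('a::chilbert_space \<times> 'a) set" and w :: "nat \<Rightarrow> 'a \<times> 'a"
  assumes T: "closed_subspace T" and S: "closed_subspace S" and A: "closed_subspace A"
    and sum: "T = rel_sum S A" and dom: "rdom S \<subseteq> rdom A"
    and lT: "l \<in> resolvent_set T" and lS: "l \<in> resolvent_set S"
    and rc: "rel_compact (Tpart A) (Tpart S)"
    and w: "\<And>n. w n \<in> orth S" "\<And>n. norm (w n) \<le> M"
  shows "\<exists>r. strict_mono r \<and> Cauchy (\<lambda>n. oproj T (w (r n)))"
proof -
  note T' = closed_csubspace_if_closed_subspace[OF T] and S' = closed_csubspace_if_closed_subspace[OF S]
  define D where "D g = (resolvent T l g, l *\<^sub>C resolvent T l g)
    - oproj S (resolvent T l g, l *\<^sub>C resolvent T l g)" for g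
  have D: "bounded_linear D" unfolding D_def
    by (intro bounded_linear_oproj_residual[OF S'] bounded_linear_Pair bounded_linear_resolvent[OF T lT]
        bounded_linear_compose[OF bounded_linear_scaleC])
  obtain C where C: "C \<ge> 0" "\<And>p. p \<in> T \<Longrightarrow> \<exists>g. g \<in> graph_ball_image (Tpart A) (Tpart S) (C * norm p)
      \<and> p - (resolvent T l g, l *\<^sub>C resolvent T l g) \<in> S"
    using rel_sum_resolvent_decomposition_bounded[OF T S A sum dom lT lS] by blast
  have "\<exists>g. g \<in> graph_ball_image (Tpart A) (Tpart S) (C * M)
      \<and> oproj T (w n) - oproj S (oproj T (w n)) = D g" for n
  proof -
    have "C * norm (oproj T (w n)) \<le> C * M"
      using norm_oproj_le(1)[OF T', of "w n"] w(2)[of n] C(1) by (intro mult_left_mono) auto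
    then show ?thesis
      using C(2)[OF oproj_in[OF T']] graph_ball_image_mono oproj_residual_eq[OF S'] unfolding D_def
      by blast
  qed
  then obtain g where "\<forall>n. g n \<in> graph_ball_image (Tpart A) (Tpart S) (C * M)
      \<and> oproj T (w n) - oproj S (oproj T (w n)) = D (g n)"
    by (rule choice[OF allI, THEN exE])
  note g = this[rule_format, THEN conjunct1] and Dg = this[rule_format, THEN conjunct2]
  obtain r where r: "strict_mono r" "Cauchy (g \<circ> r)"
    using rel_compact_Cauchy_subseq[where f = g, OF rc g] by blast
  have "(norm (oproj T (w (r m)) - oproj T (w (r n))))\<^sup>2
      \<le> (2 * M) * norm (D (g (r m)) - D (g (r n)))" for m n
  proof -
    have "(norm (oproj T (w (r m)) - oproj T (w (r n))))\<^sup>2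
        \<le> norm (w (r m) - w (r n)) * norm (D (g (r m)) - D (g (r n)))"
      using power2_norm_oproj_diff_le[OF T' S' w(1) w(1)] by (simp only: Dg)
    also have "\<dots> \<le> (2 * M) * norm (D (g (r m)) - D (g (r n)))"
      using norm_triangle_ineq4[of "w (r m)" "w (r n)"] w(2)[of "r m"] w(2)[of "r n"]
      by (intro mult_right_mono) simp_all
    finally show ?thesis .
  qed
  then have "Cauchy (\<lambda>n. oproj T (w (r n)))"
    by (intro Cauchy_if_power_dist_le[where k = 2, OF bounded_linear.Cauchy[OF D r(2)]]) (simp_all add: o_def)
  with r(1) show ?thesis by blast
qed

lemma oproj_diff_Cauchy_subseq:
  fixes T S A :: "('a::chilbert_space \<times> 'a) set" and z :: "nat \<Rightarrow> 'a \<times> 'a"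
  assumes T: "closed_subspace T" and S: "closed_subspace S" and A: "closed_subspace A"
    and sum: "T = rel_sum S A" and dom: "rdom S \<subseteq> rdom A"
    and lT: "l \<in> resolvent_set T" and lS: "l \<in> resolvent_set S"
    and rc: "rel_compact (Tpart A) (Tpart S)" and z: "\<And>n. norm (z n) \<le> M"
  shows "\<exists>r. strict_mono r \<and> Cauchy (\<lambda>n. oproj T (z (r n)) - oproj S (z (r n)))"
proof -
  note T' = closed_csubspace_if_closed_subspace[OF T] and S' = closed_csubspace_if_closed_subspace[OF S]
  define a where "a n = oproj S (z n)" for n
  define w where "w n = z n - a n" for n
  have a: "\<And>n. a n \<in> S" "\<And>n. norm (a n) \<le> M"
    unfolding a_def by (rule oproj_in[OF S'], rule order.trans[OF norm_oproj_le(1)[OF S'] z])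
  have w: "\<And>n. w n \<in> orth S" "\<And>n. norm (w n) \<le> M"
    unfolding w_def a_def by (rule oproj_orth[OF S'], rule order.trans[OF norm_oproj_le(2)[OF S'] z])
  obtain r1 where r1: "strict_mono r1" "Cauchy (\<lambda>n. oproj T (a (r1 n)) - a (r1 n))"
    using oproj_minus_self_Cauchy_subseq[where a = a, OF T S A sum dom rc a] by blast
  have "\<And>n. (w \<circ> r1) n \<in> orth S" "\<And>n. norm ((w \<circ> r1) n) \<le> M" using w by simp_all
  from oproj_orth_Cauchy_subseq[where w = "w \<circ> r1", OF T S A sum dom lT lS rc this]
  obtain r2 where r2: "strict_mono r2" "Cauchy (\<lambda>n. oproj T (w (r1 (r2 n))))" by auto
  have "Cauchy (\<lambda>n. oproj T (a (r1 (r2 n))) - a (r1 (r2 n)))"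
    using Cauchy_subseq_Cauchy[OF r1(2) r2(1)] by (simp add: o_def)
  from Cauchy_add[OF this r2(2)]
  have "Cauchy (\<lambda>n. oproj T (z (r1 (r2 n))) - oproj S (z (r1 (r2 n))))"
    by (simp add: w_def a_def oproj_diff[OF T'] algebra_simps)
  with strict_mono_o[OF r1(1) r2(1)] show ?thesis by (auto simp: o_def)
qed

lemma compact_perturbation_if_rel_compact:
  fixes T S A :: "('a::chilbert_space \<times> 'a) set"
  assumes T: "closed_subspace T" and S: "closed_subspace S" and A: "closed_subspace A"
    and sum: "T = rel_sum S A" and dom: "rdom S \<subseteq> rdom A"
    and lT: "l \<in> resolvent_set T" and lS: "l \<in> resolvent_set S"
    and rc: "rel_compact (Tpart A) (Tpart S)"
  shows "compact_perturbation T S"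
  unfolding compact_perturbation_def compact_op_def oproj2_eq_oproj
proof (intro allI impI)
  fix B :: "('a \<times> 'a) set" assume "bounded B"
  then obtain M where M: "\<And>z. z \<in> B \<Longrightarrow> norm z \<le> M" by (auto simp: bounded_iff)
  show "compact (closure ((\<lambda>z. oproj T z - oproj S z) ` B))"
    unfolding compact_closure_iff_Cauchy_subseq
  proof (intro allI impI)
    fix \<sigma> :: "nat \<Rightarrow> 'a \<times> 'a" assume "range \<sigma> \<subseteq> (\<lambda>z. oproj T z - oproj S z) ` B"
    then have "\<forall>n. \<exists>z. z \<in> B \<and> \<sigma> n = oproj T z - oproj S z" by (blast dest: range_subsetD)
    then obtain z where "\<forall>n. z n \<in> B \<and> \<sigma> n = oproj T (z n) - oproj S (z n)"
      by (rule choice[THEN exE])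
    note z = this[rule_format, THEN conjunct1] this[rule_format, THEN conjunct2]
    obtain r where "strict_mono r" "Cauchy (\<lambda>n. oproj T (z (r n)) - oproj S (z (r n)))"
      using oproj_diff_Cauchy_subseq[where z = z, OF T S A sum dom lT lS rc M[OF z(1)]] by blast
    then show "\<exists>r. strict_mono r \<and> Cauchy (\<sigma> \<circ> r)" by (auto simp: o_def z(2))
  qed
qed

section \<open>Part (ii): the converse under reduction and boundedness\<close>

lemma norm_le_oproj_residual_if_bounded_Tpart:
  fixes T :: "('a::chilbert_space \<times> 'a) set"
  assumes T: "closed_subspace T" and bd: "bounded_rel (Tpart T)"
  obtains K where "\<And>h. h \<in> orth (img T 0) \<Longrightarrow> norm h \<le> K * norm ((0, h) - oproj T (0, h))"
proof -
  obtain C where C: "\<And>x f. (x, f) \<in> Tpart T \<Longrightarrow> norm f \<le> C * norm x"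
    using bd by (auto simp: bounded_rel_def)
  note T' = closed_csubspace_if_closed_subspace[OF T] and I = closed_csubspace_img_zero[OF T]
  have "norm h \<le> (1 + \<bar>C\<bar>) * norm ((0, h) - oproj T (0, h))" if h: "h \<in> orth (img T 0)" for h
  proof -
    obtain x g where p: "oproj T (0, h) = (x, g)" by fastforce
    define m where "m = oproj (img T 0) g"
    have "(x, g - m) \<in> Tpart T"
      unfolding m_def by (rule Tpart_oproj_residual[OF T]) (use oproj_in[OF T', of "(0, h)"] p in simp)
    then have t: "norm (g - m) \<le> \<bar>C\<bar> * norm x" "g - m \<in> orth (img T 0)"
      using C[of x "g - m"] abs_ge_self[of C] mult_right_mono[of C "\<bar>C\<bar>" "norm x"]
      by (auto simp: Tpart_iff)
    \<comment> \<open>\<open>h - (g - m)\<close> is orthogonal to \<open>m \<in> T(0)\<close>, so removing \<open>m\<close> can only shorten \<open>h - g\<close>\<close>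
    have "h - (g - m) \<in> orth (img T 0)" using h t(2) by (rule complex_subspace_diff[OF complex_subspace_orth])
    then have "cinner (h - (g - m)) m = 0" unfolding m_def by (rule orthD[OF _ oproj_in[OF I]])
    then have "cinner (h - (g - m)) (- m) = 0" by (simp add: cinner_minus_right)
    from pythagoras[OF this] have "norm (h - (g - m)) \<le> norm (h - g)"
      by (simp add: power2_le_imp_le algebra_simps)
    moreover have "norm x \<le> norm ((0, h) - oproj T (0, h))" "norm (h - g) \<le> norm ((0, h) - oproj T (0, h))"
      using norm_fst_le[of "- x" "h - g"] norm_snd_le[of "h - g" "- x"] p by simp_all
    moreover have "norm h \<le> norm (h - (g - m)) + norm (g - m)"
      using norm_triangle_ineq[of "h - (g - m)" "g - m"] by simp
    moreover have "\<bar>C\<bar> * norm x \<le> \<bar>C\<bar> * norm ((0, h) - oproj T (0, h))"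
      using \<open>norm x \<le> _\<close> by (rule mult_left_mono) simp
    ultimately have "norm h \<le> norm ((0, h) - oproj T (0, h)) + \<bar>C\<bar> * norm ((0, h) - oproj T (0, h))"
      using t(1) by linarith
    then show ?thesis by (simp add: algebra_simps)
  qed
  then show ?thesis by (rule that)
qed

lemma oproj_diff_rel_sum_eq:
  fixes T S A :: "('a::chilbert_space \<times> 'a) set"
  assumes T: "closed_subspace T" and S: "closed_subspace S" and sum: "T = rel_sum S A"
    and xv: "(x, v) \<in> S" and xs: "(x, s) \<in> A"
  shows "oproj T (x, v) - oproj S (x, v) = (0, s) - oproj T (0, s)"
  using oproj_residual_shift[OF T rel_sumI[OF xv xs, folded sum]]
    oproj_eq_self[OF closed_csubspace_if_closed_subspace[OF S] xv]
  by simp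

lemma rel_sum_Tpart_orth_img:
  fixes T S A :: "('a::chilbert_space \<times> 'a) set"
  assumes S: "closed_subspace S" and A: "closed_subspace A" and sum: "T = rel_sum S A"
    and hT: "hermitian T" and rA: "reduces (orth (img T 0)) A"
    and x: "x \<in> rdom T" and xs: "(x, s) \<in> Tpart A"
  shows "s \<in> orth (img T 0)"
  using reduces_Tpart_into_orth[OF A rA _ hermitian_rdom_orth_img[OF hT x] xs]
    img_zero_rel_sum_right[OF S, of A] sum
  by blast

lemma rel_compact_if_compact_perturbation:
  fixes T S A :: "('a::chilbert_space \<times> 'a) set"
  assumes T: "closed_subspace T" and S: "closed_subspace S" and A: "closed_subspace A"
    and hT: "hermitian T" and dTS: "rdom T = rdom S" and dSA: "rdom S \<subseteq> rdom A"
    and sum: "T = rel_sum S A" and cp: "compact_perturbation T S"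
    and rA: "reduces (orth (img T 0)) A" and bT: "bounded_rel (Tpart T)"
  shows "rel_compact (Tpart A) (Tpart S)"
proof (rule rel_compactI)
  show "rdom (Tpart S) \<subseteq> rdom (Tpart A)" using dSA by (simp add: rdom_Tpart S A)
  define E where "E h = (0, h) - oproj T (0, h)" for h :: 'a
  have Ediff: "E a - E b = E (a - b)" for a b
    unfolding E_def using oproj_diff[OF closed_csubspace_if_closed_subspace[OF T], of "(0, a)" "(0, b)"]
    by simp
  obtain K where K: "\<And>h. h \<in> orth (img T 0) \<Longrightarrow> norm h \<le> K * norm (E h)"
    using norm_le_oproj_residual_if_bounded_Tpart[OF T bT] unfolding E_def by blast
  have "compact_op (\<lambda>z. oproj T z - oproj S z)"
    using cp by (simp add: compact_perturbation_def oproj2_eq_oproj)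
  fix N and \<sigma> :: "nat \<Rightarrow> 'a" assume "\<And>n. \<sigma> n \<in> graph_ball_image (Tpart A) (Tpart S) N"
  then have "\<forall>n. \<exists>p. p \<in> Tpart S \<and> norm p \<le> N \<and> (fst p, \<sigma> n) \<in> Tpart A"
    unfolding graph_ball_image_def by (force intro: order.trans[OF norm_Pair_le])
  then obtain p where "\<forall>n. p n \<in> Tpart S \<and> norm (p n) \<le> N \<and> (fst (p n), \<sigma> n) \<in> Tpart A"
    by (rule choice[THEN exE])
  then have pS: "\<And>n. (fst (p n), snd (p n)) \<in> S" and pN: "\<And>n. norm (p n) \<le> N"
    and pA: "\<And>n. (fst (p n), \<sigma> n) \<in> Tpart A"
    using Tpart_subset by auto
  have \<sigma>_orth: "\<sigma> n \<in> orth (img T 0)" for n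
  proof (rule rel_sum_Tpart_orth_img[OF S A sum hT rA _ pA])
    show "fst (p n) \<in> rdom T" using pS[of n] dTS unfolding rdom_def by blast
  qed
  have "oproj T (p n) - oproj S (p n) = E (\<sigma> n)" for n
    using oproj_diff_rel_sum_eq[OF T S sum pS] pA[of n] Tpart_subset unfolding E_def by auto
  with compact_op_Cauchy_subseq[where z = p, OF \<open>compact_op _\<close> pN]
  obtain r where r: "strict_mono r" "Cauchy (\<lambda>n. E (\<sigma> (r n)))" by auto
  have dist: "norm (\<sigma> (r m) - \<sigma> (r n)) \<le> K * norm (E (\<sigma> (r m)) - E (\<sigma> (r n)))" for m n
    unfolding Ediff using K[OF complex_subspace_diff[OF complex_subspace_orth \<sigma>_orth \<sigma>_orth]] by simp
  have "Cauchy (\<sigma> \<circ> r)"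
    by (rule Cauchy_if_power_dist_le[where k = 1 and K = K, OF r(2)]) (simp_all add: dist)
  with r(1) show "\<exists>r. strict_mono r \<and> Cauchy (\<sigma> \<circ> r)" by blast
qed

theorem theorem3p4:
  fixes T S A :: "('a::chilbert_space \<times> 'a) set"
  assumes "closed_subspace T" and "closed_subspace S" and "closed_subspace A"
    and "hermitian T" and "hermitian S" and "hermitian A"
    and "rdom T = rdom S" and "rdom S \<subseteq> rdom A"
    and "T = rel_sum S A"
    and "resolvent_set T \<inter> resolvent_set S \<noteq> {}"
  shows "(rel_compact (Tpart A) (Tpart S) \<longrightarrow> compact_perturbation T S)
       \<and> ((compact_perturbation T S \<and> reduces (orth (img T 0)) S \<and> reduces (orth (img T 0)) A
            \<and> bounded_rel (Tpart T))
          \<longrightarrow> rel_compact (Tpart A) (Tpart S))"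
proof (intro conjI impI)
  obtain l where "l \<in> resolvent_set T" "l \<in> resolvent_set S" using assms(10) by blast
  then show "compact_perturbation T S" if "rel_compact (Tpart A) (Tpart S)"
    using compact_perturbation_if_rel_compact[OF assms(1-3,9,8)] that by blast
next
  assume "compact_perturbation T S \<and> reduces (orth (img T 0)) S \<and> reduces (orth (img T 0)) A
    \<and> bounded_rel (Tpart T)"
  then show "rel_compact (Tpart A) (Tpart S)"
    using rel_compact_if_compact_perturbation[OF assms(1-4,7-9)] by blast
qed

end
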